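(* Let $G:[0,1]\to\mathbb R$ be strictly convex and differentiable on $(0,1)$ and let $\mathcal I=(\Omega,\mathbb P,\mathcal S,\mathcal T,Y)$ be any information structure. Let $I_1,\dots,I_N$ be a partition of $[0,1]$ into intervals; for $u\in[0,1]$ let $k(u)$ be the index with $u\in I_{k(u)}$, let $S^{(k)}:=\{\sigma'\in\mathcal S:\mu_{\sigma'}\in I_k\}$, and write $k(\sigma):=k(\mu_\sigma)$, $k(\tau):=k(\mu_\tau)$. Let $Q=\mathbb P(k(\sigma)\ne k(\tau))$. Then $\mathbb E\big[D_G(\mu_{S^{(k(\sigma))}\tau}\parallel\mu_\tau)\big]\le 2\tilde G^*(Q)$, where $\mu_{S^{(k(\sigma))}\tau}=\mathbb E[Y\mid \sigma\in S^{(k(\sigma))},\tau]$, i.e. the expectation of $Y$ given $\tau$ and the index $k(\sigma)$.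
   Context: An information structure is a tuple $(\Omega,\mathbb P,\mathcal S,\mathcal T,Y)$: a probability space, random variables $\sigma:\Omega\to\mathcal S$, $\tau:\Omega\to\mathcal T$, $Y:\Omega\to[0,1]$. $\mu_\sigma=\mathbb E[Y\mid\sigma]$, $\mu_\tau=\mathbb E[Y\mid\tau]$, and for measurable $S\subseteq\mathcal S$, $\mu_{S\tau}=\mathbb E[Y\mid\sigma\in S,\tau]$. $D_G(y\parallel x)=G(y)-G(x)-(y-x)G'(x)$. For $x\ge0$, $\tilde G(x):=\max_{a,b\in[0,1],\,|a-b|\le x}(G(a)-G(b))$ (so $\tilde G(x)=\sup G-\inf G$ for $x\ge1$), and $\tilde G^*$ is the smallest concave function on $[0,\infty)$ that is $\ge\tilde G$. *)

theory Defs
  imports "HOL-Probability.Probability"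
begin

definition strictly_convex_on :: "real set \<Rightarrow> (real \<Rightarrow> real) \<Rightarrow> bool" where
  "strictly_convex_on A G \<longleftrightarrow>
     (\<forall>x\<in>A. \<forall>y\<in>A. \<forall>t. x \<noteq> y \<and> 0 < t \<and> t < 1 \<longrightarrow>
        G ((1 - t) * x + t * y) < (1 - t) * G x + t * G y)"

definition bregman :: "(real \<Rightarrow> real) \<Rightarrow> real \<Rightarrow> real \<Rightarrow> real" where
  "bregman G y x = G y - G x - (y - x) * deriv G x"

definition Gtilde :: "(real \<Rightarrow> real) \<Rightarrow> real \<Rightarrow> real" where
  "Gtilde G x = Sup {G a - G b | a b. a \<in> {0..1} \<and> b \<in> {0..1} \<and> \<bar>a - b\<bar> \<le> x}"

definition Gtilde_star :: "(real \<Rightarrow> real) \<Rightarrow> real \<Rightarrow> real" where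
  "Gtilde_star G x = Inf {h x | h. concave_on {0..} h \<and> (\<forall>t\<ge>0. Gtilde G t \<le> h t)}"

definition kidx :: "(nat \<Rightarrow> real set) \<Rightarrow> nat \<Rightarrow> real \<Rightarrow> nat" where
  "kidx I N u = (THE k. k < N \<and> u \<in> I k)"

end

theory Submission
  imports Defs
begin

text \<open>
  Let \<open>F = \<sigma>(\<tau>)\<close> and \<open>H = \<sigma>(k(\<sigma>), \<tau>)\<close>, so that \<open>\<mu>\<^sub>\<tau> = E[Y | F]\<close> and \<open>\<mu>\<^sub>S\<^sub>\<tau> = E[Y | H]\<close>,
  and let \<open>E\<close> be the event \<open>k(\<sigma>) = k(\<tau>)\<close>, of probability \<open>1 - Q\<close>. Since \<open>k(\<tau>)\<close> is \<open>F\<close>-measurable,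
  every event of \<open>H\<close> agrees on \<open>E\<close> with an event of \<open>F\<close>; hence on \<open>E\<close> the finer expectation is
  \<open>E[Y 1\<^sub>E | F] / P(E | F)\<close>, which is within \<open>q = P(E\<^sup>c | F)\<close> of \<open>\<mu>\<^sub>\<tau>\<close>. As \<open>F \<subseteq> H\<close>, the tangent term of
  the Bregman divergence has mean zero, so its expectation is \<open>E[G(\<mu>\<^sub>S\<^sub>\<tau>) - G(\<mu>\<^sub>\<tau>)]\<close>, which is at most
  \<open>E[G\<^sup>~(q)] + G\<^sup>~(1) Q\<close>. For a concave majorant \<open>h\<close> of \<open>G\<^sup>~\<close>, Jensen gives \<open>E[h(q)] \<le> h(E q) = h(Q)\<close>,
  and \<open>h(0) \<ge> 0\<close> gives \<open>h(1) Q \<le> h(Q)\<close>; the infimum over \<open>h\<close> is \<open>2 G\<^sup>~\<^sup>*(Q)\<close>.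
\<close>

section \<open>Convex functions on the unit interval\<close>

lemma strictly_convex_on_imp_convex_on:
  assumes "convex A" and "strictly_convex_on A G"
  shows "convex_on A G"
proof (rule convex_onI)
  fix t x y :: real
  assume "0 < t" "t < 1" "x \<in> A" "y \<in> A"
  then show "G ((1 - t) *\<^sub>R x + t *\<^sub>R y) \<le> (1 - t) * G x + t * G y"
  proof (cases "x = y")
    case False
    with assms(2) \<open>0 < t\<close> \<open>t < 1\<close> \<open>x \<in> A\<close> \<open>y \<in> A\<close> show ?thesis
      unfolding strictly_convex_on_def by (auto intro: less_imp_le)
  qed (simp add: algebra_simps)
qed (fact assms(1))

lemma convex_on_01_bounded:
  fixes G :: "real \<Rightarrow> real"
  assumes "convex_on {0..1} G"
  obtains B where "\<And>x. x \<in> {0..1} \<Longrightarrow> \<bar>G x\<bar> \<le> B"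
proof -
  define U where "U = max (G 0) (G 1)"
  have upper: "G x \<le> U" if "x \<in> {0..1}" for x
  proof -
    have "G ((1 - x) *\<^sub>R 0 + x *\<^sub>R 1) \<le> (1 - x) * G 0 + x * G 1"
      using convex_onD[OF assms, of x 0 1] that by auto
    also have "\<dots> \<le> (1 - x) * U + x * U"
      using that by (intro add_mono mult_left_mono) (auto simp: U_def)
    finally show ?thesis by (simp add: algebra_simps)
  qed
  have lower: "2 * G (1/2) - U \<le> G x" if "x \<in> {0..1}" for x
  proof -
    have midpoint: "(1 - 1/2) *\<^sub>R x + (1/2) *\<^sub>R (1 - x) = (1/2 :: real)"
      by (simp add: field_simps)
    have "G (1/2) \<le> (1 - 1/2) * G x + (1/2) * G (1 - x)"
      using convex_onD[OF assms, of "1/2" x "1 - x"] that unfolding midpoint by auto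
    with upper[of "1 - x"] that show ?thesis by simp
  qed
  show ?thesis
  proof (rule that)
    fix x :: real assume "x \<in> {0..1}"
    with upper[of x] lower[of x] show "\<bar>G x\<bar> \<le> \<bar>U\<bar> + \<bar>2 * G (1/2) - U\<bar>"
      by linarith
  qed
qed

lemma convex_on_01_deriv_tangent:
  assumes "convex_on {0..1} G" and "G differentiable (at x)"
    and "x \<in> {0<..<1}" and "y \<in> {0..1}"
  shows "deriv G x * (y - x) \<le> G y - G x"
proof (rule convex_on_imp_above_tangent[OF assms(1)])
  have "(G has_field_derivative deriv G x) (at x)"
    using assms(2) DERIV_deriv_iff_real_differentiable by blast
  then show "(G has_field_derivative deriv G x) (at x within {0..1})"
    by (rule has_field_derivative_at_within)
qed (use assms(3,4) in auto)

lemma convex_on_01_deriv_mono: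
  assumes "convex_on {0..1} G" and "\<And>x. x \<in> {0<..<1} \<Longrightarrow> G differentiable (at x)"
  shows "mono_on {0<..<1} (deriv G)"
proof (rule mono_onI)
  fix x y :: real
  assume xy: "x \<in> {0<..<1}" "y \<in> {0<..<1}" "x \<le> y"
  have "deriv G x * (y - x) \<le> G y - G x" "deriv G y * (x - y) \<le> G x - G y"
    using convex_on_01_deriv_tangent[OF assms(1) assms(2)] xy(1,2) by auto
  then have "0 \<le> (deriv G y - deriv G x) * (y - x)"
    by (simp add: algebra_simps)
  then show "deriv G x \<le> deriv G y"
    using xy(3) by (cases "x = y") (auto simp: zero_le_mult_iff)
qed

lemma bregman_nonneg:
  assumes "convex_on {0..1} G" and "\<And>x. x \<in> {0<..<1} \<Longrightarrow> G differentiable (at x)"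
    and "x \<in> {0..1}" and "y \<in> {0..1}" and "x \<in> {0, 1} \<Longrightarrow> y = x"
  shows "0 \<le> bregman G y x"
proof (cases "x \<in> {0<..<1}")
  case True
  then show ?thesis
    using convex_on_01_deriv_tangent[OF assms(1) assms(2) True assms(4)] True
    by (simp add: bregman_def algebra_simps)
next
  case False
  with assms(3,5) show ?thesis by (auto simp: bregman_def)
qed

lemma borel_measurable_indicator_01_mult:
  fixes G :: "real \<Rightarrow> real"
  assumes "continuous_on {0<..<1} G"
  shows "(\<lambda>x. indicator {0..1} x * G x) \<in> borel_measurable borel"
proof -
  have "(\<lambda>x. indicator {0<..<1} x * G x) \<in> borel_measurable borel"
    using borel_measurable_continuous_on_indicator[OF _ assms] by simp
  then have "(\<lambda>x. indicator {0<..<1} x * G x + indicator {0} x * G 0 + indicator {1} x * G 1)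
      \<in> borel_measurable borel"
    by (rule borel_measurable_add[OF borel_measurable_add]) auto
  also have "(\<lambda>x. indicator {0<..<1} x * G x + indicator {0} x * G 0 + indicator {1} x * G 1)
      = (\<lambda>x. indicator {0..1} x * G x)"
    by (auto simp: fun_eq_iff indicator_def)
  finally show ?thesis .
qed

lemma borel_measurable_indicator_mono_on_mult:
  fixes f :: "real \<Rightarrow> real"
  assumes "mono_on A f" and "A \<in> sets borel"
  shows "(\<lambda>x. indicator A x * f x) \<in> borel_measurable borel"
proof -
  have "(\<lambda>x. indicator A x *\<^sub>R f x) \<in> borel_measurable borel"
    using borel_measurable_mono_on_fnc[OF assms(1)] assms(2)
    by (subst (asm) borel_measurable_restrict_space_iff) auto
  then show ?thesis by simp
qed

section \<open>The modulus \<open>Gtilde\<close> and its least concave majorant\<close>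

lemma Gtilde_ge:
  assumes "\<And>x. x \<in> {0..1} \<Longrightarrow> \<bar>G x\<bar> \<le> B"
    and "a \<in> {0..1}" "b \<in> {0..1}" "\<bar>a - b\<bar> \<le> x"
  shows "G a - G b \<le> Gtilde G x"
  unfolding Gtilde_def
proof (rule cSup_upper)
  show "G a - G b \<in> {G a - G b |a b. a \<in> {0..1} \<and> b \<in> {0..1} \<and> \<bar>a - b\<bar> \<le> x}"
    using assms by blast
  show "bdd_above {G a - G b |a b. a \<in> {0..1} \<and> b \<in> {0..1} \<and> \<bar>a - b\<bar> \<le> x}"
  proof (rule bdd_aboveI)
    fix y assume "y \<in> {G a - G b |a b. a \<in> {0..1} \<and> b \<in> {0..1} \<and> \<bar>a - b\<bar> \<le> x}"
    then obtain a b where "y = G a - G b" "a \<in> {0..1}" "b \<in> {0..1}" by blast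
    with assms(1)[of a] assms(1)[of b] show "y \<le> 2 * B" by linarith
  qed
qed

lemma Gtilde_nonneg:
  assumes "\<And>x. x \<in> {0..1} \<Longrightarrow> \<bar>G x\<bar> \<le> B" and "0 \<le> x"
  shows "0 \<le> Gtilde G x"
  using Gtilde_ge[OF assms(1), where a = 0 and b = 0 and x = x] assms(2) by simp

lemma Gtilde_le:
  assumes "\<And>x. x \<in> {0..1} \<Longrightarrow> \<bar>G x\<bar> \<le> B" and "0 \<le> x"
  shows "Gtilde G x \<le> 2 * B"
  unfolding Gtilde_def
proof (rule cSup_least)
  show "{G a - G b |a b. a \<in> {0..1} \<and> b \<in> {0..1} \<and> \<bar>a - b\<bar> \<le> x} \<noteq> {}"
    using assms by force
  fix y assume "y \<in> {G a - G b |a b. a \<in> {0..1} \<and> b \<in> {0..1} \<and> \<bar>a - b\<bar> \<le> x}"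
  then obtain a b where "y = G a - G b" "a \<in> {0..1}" "b \<in> {0..1}" by blast
  with assms(1)[of a] assms(1)[of b] show "y \<le> 2 * B" by linarith
qed

lemma le_Gtilde_star:
  fixes X :: ennreal
  assumes bound: "\<And>x. x \<in> {0..1} \<Longrightarrow> \<bar>G x\<bar> \<le> B" and "0 \<le> Q"
    and majorant: "\<And>h. concave_on {0..} h \<Longrightarrow> \<forall>t\<ge>0. Gtilde G t \<le> h t
                     \<Longrightarrow> X \<le> ennreal (2 * h Q)"
  shows "X \<le> ennreal (2 * Gtilde_star G Q)"
proof -
  define V where "V = {h Q | h. concave_on {0..} h \<and> (\<forall>t\<ge>0. Gtilde G t \<le> h t)}"
  have X_le: "X \<le> ennreal (2 * v)" and v_nonneg: "0 \<le> v" if "v \<in> V" for v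
  proof -
    obtain h where h: "v = h Q" "concave_on {0..} h" "\<forall>t\<ge>0. Gtilde G t \<le> h t"
      using \<open>v \<in> V\<close> unfolding V_def by blast
    then show "X \<le> ennreal (2 * v)"
      using majorant[OF h(2,3)] by simp
    show "0 \<le> v"
      using h Gtilde_nonneg[where G = G, OF bound \<open>0 \<le> Q\<close>] \<open>0 \<le> Q\<close> by auto
  qed
  have "2 * B \<in> V"
    unfolding V_def mem_Collect_eq
  proof (intro exI[of _ "\<lambda>_. 2 * B"] conjI allI impI)
    show "concave_on {0..} (\<lambda>_::real. 2 * B)"
      by (simp add: concave_on_const)
  qed (use Gtilde_le[where G = G, OF bound] in auto)
  then have "V \<noteq> {}"
    by blast
  have "X \<noteq> \<top>"
    using X_le[OF \<open>2 * B \<in> V\<close>] by (auto simp: top_unique)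
  then obtain x where x: "X = ennreal x" "0 \<le> x"
    by (cases X) auto
  have "x / 2 \<le> Inf V"
  proof (rule cInf_greatest[OF \<open>V \<noteq> {}\<close>])
    fix v assume "v \<in> V"
    then have "x \<le> 2 * v"
      using X_le v_nonneg x by (simp add: ennreal_le_iff)
    then show "x / 2 \<le> v" by simp
  qed
  then have "x \<le> 2 * Gtilde_star G Q"
    unfolding Gtilde_star_def V_def[symmetric] by simp
  then show ?thesis
    unfolding x(1) by (rule ennreal_leI)
qed

lemma concave_on_affine_majorant:
  fixes h :: "real \<Rightarrow> real"
  assumes "concave_on {0..} h" and "0 < Q"
  obtains c where "\<And>y. 0 \<le> y \<Longrightarrow> h y \<le> h Q + c * (y - Q)"
proof -
  have "convex_on {0..} (\<lambda>x. - h x)"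
    using assms(1) unfolding concave_on_def .
  define c where "c = Inf ((\<lambda>t. (- h Q - - h t) / (Q - t)) ` ({Q<..} \<inter> {0..}))"
  have "- h Q + c * (y - Q) \<le> - h y" if "0 \<le> y" for y
    unfolding c_def
    by (rule convex_le_Inf_differential[OF \<open>convex_on {0..} (\<lambda>x. - h x)\<close>])
       (use assms(2) that in auto)
  then show ?thesis
    by (intro that[of "- c"]) (simp add: algebra_simps)
qed

lemma concave_on_mult_le:
  fixes h :: "real \<Rightarrow> real"
  assumes "concave_on {0..} h" and "0 \<le> h 0" and "0 \<le> Q" "Q \<le> 1"
  shows "Q * h 1 \<le> h Q"
proof -
  have "(1 - Q) * h 0 + Q * h 1 \<le> h ((1 - Q) *\<^sub>R 0 + Q *\<^sub>R 1)"
    by (rule concave_onD[OF assms(1)]) (use assms(3,4) in auto)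
  moreover have "0 \<le> (1 - Q) * h 0"
    using assms(2,4) by simp
  ultimately show ?thesis by simp
qed

lemma AE_concave_on_affine_majorant:
  fixes q :: "'a \<Rightarrow> real" and h :: "real \<Rightarrow> real"
  assumes concave: "concave_on {0..} h" and q: "integrable M q" and nonneg: "AE x in M. 0 \<le> q x"
  obtains c where "AE x in M. h (q x) \<le> h (\<integral>x. q x \<partial>M) + c * (q x - (\<integral>x. q x \<partial>M))"
proof (cases "(\<integral>x. q x \<partial>M) = 0")
  case True
  then have "AE x in M. q x = 0"
    using integral_nonneg_eq_0_iff_AE[OF q nonneg] by simp
  then have "AE x in M. h (q x) \<le> h (\<integral>x. q x \<partial>M) + 0 * (q x - (\<integral>x. q x \<partial>M))"
    by eventually_elim (simp add: True)
  then show ?thesis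
    by (rule that)
next
  case False
  with integral_nonneg_AE[OF nonneg] have "0 < (\<integral>x. q x \<partial>M)"
    by simp
  then obtain c where c: "\<And>y. 0 \<le> y \<Longrightarrow> h y \<le> h (\<integral>x. q x \<partial>M) + c * (y - (\<integral>x. q x \<partial>M))"
    using concave_on_affine_majorant[OF concave] by blast
  have "AE x in M. h (q x) \<le> h (\<integral>x. q x \<partial>M) + c * (q x - (\<integral>x. q x \<partial>M))"
    using nonneg by eventually_elim (simp add: c)
  then show ?thesis
    by (rule that)
qed

section \<open>Expected Bregman divergences\<close>

lemma (in finite_measure) integrable_unit_interval:
  fixes f :: "'a \<Rightarrow> real"
  assumes "f \<in> borel_measurable M" and "AE x in M. f x \<in> {0..1}"
  shows "integrable M f"
proof (rule integrable_const_bound[where B = 1])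
  show "AE x in M. norm (f x) \<le> 1"
    using assms(2) by eventually_elim auto
qed (fact assms(1))

lemma nn_integral_le_by_truncation:
  fixes D g :: "'a \<Rightarrow> real"
  assumes [measurable]: "D \<in> borel_measurable M" "g \<in> borel_measurable M"
    and le: "\<And>n::nat. (\<integral>\<^sup>+x. ennreal (if \<bar>g x\<bar> \<le> n then D x else 0) \<partial>M) \<le> C"
  shows "(\<integral>\<^sup>+x. ennreal (D x) \<partial>M) \<le> C"
proof -
  define f where "f n x = ennreal (if \<bar>g x\<bar> \<le> real n then D x else 0)" for n x
  have f_le: "f n x \<le> ennreal (D x)" for n x
    by (cases "0 \<le> D x") (auto simp: f_def intro: ennreal_leI ennreal_neg)
  have "incseq f"
  proof (intro incseq_SucI le_funI)
    fix n x
    show "f n x \<le> f (Suc n) x"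
      by (cases "0 \<le> D x") (auto simp: f_def intro: ennreal_leI ennreal_neg)
  qed
  have "ennreal (D x) = (SUP n. f n x)" for x
  proof (rule antisym)
    have "f (nat \<lceil>\<bar>g x\<bar>\<rceil>) x = ennreal (D x)"
      by (simp add: f_def real_nat_ceiling_ge)
    then show "ennreal (D x) \<le> (SUP n. f n x)"
      by (metis SUP_upper UNIV_I)
  qed (rule SUP_least, rule f_le)
  then have "(\<integral>\<^sup>+x. ennreal (D x) \<partial>M) = (\<integral>\<^sup>+x. (SUP n. f n x) \<partial>M)"
    by simp
  also have "\<dots> = (SUP n. \<integral>\<^sup>+x. f n x \<partial>M)"
    by (rule nn_integral_monotone_convergence_SUP[OF \<open>incseq f\<close>]) (unfold f_def, measurable)
  also have "\<dots> \<le> C"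
    using le by (intro SUP_least) (simp add: f_def)
  finally show ?thesis .
qed

text \<open>
  As \<open>\<phi>\<close> need not be bounded, the tangent term \<open>(Z - m) \<phi> m\<close> is cancelled by \<open>orth\<close> only on the
  events \<open>\<bar>\<phi> m\<bar> \<le> n\<close>, which exhaust the space.
\<close>

lemma nn_integral_tangent_divergence_le:
  fixes Z m R :: "'a \<Rightarrow> real" and \<Phi> \<phi> :: "real \<Rightarrow> real"
  assumes "prob_space M" and F: "subalgebra M F"
    and [measurable]: "Z \<in> borel_measurable M" and mF: "m \<in> borel_measurable F"
    and range: "AE x in M. Z x \<in> {0..1} \<and> m x \<in> {0..1}"
    and orth: "\<And>g C. g \<in> borel_measurable F \<Longrightarrow> (\<And>x. \<bar>g x\<bar> \<le> C) \<Longrightarrow>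
                 (\<integral>x. g x * Z x \<partial>M) = (\<integral>x. g x * m x \<partial>M)"
    and [measurable]: "\<Phi> \<in> borel_measurable borel" "\<phi> \<in> borel_measurable borel"
    and \<Phi>_bound: "\<And>x. \<bar>\<Phi> x\<bar> \<le> B"
    and nonneg: "AE x in M. 0 \<le> \<Phi> (Z x) - \<Phi> (m x) - (Z x - m x) * \<phi> (m x)"
    and intR: "integrable M R" and R: "AE x in M. 0 \<le> R x \<and> \<Phi> (Z x) - \<Phi> (m x) \<le> R x"
  shows "(\<integral>\<^sup>+x. ennreal (\<Phi> (Z x) - \<Phi> (m x) - (Z x - m x) * \<phi> (m x)) \<partial>M) \<le> ennreal (\<integral>x. R x \<partial>M)"
proof (rule nn_integral_le_by_truncation[where g = "\<lambda>x. \<phi> (m x)"])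
  interpret prob_space M by fact
  have [measurable]: "m \<in> borel_measurable M"
    using measurable_from_subalg[OF F mF] .
  show "(\<lambda>x. \<Phi> (Z x) - \<Phi> (m x) - (Z x - m x) * \<phi> (m x)) \<in> borel_measurable M"
    and "(\<lambda>x. \<phi> (m x)) \<in> borel_measurable M"
    by measurable
  fix n :: nat
  define D where "D x = (if \<bar>\<phi> (m x)\<bar> \<le> n then \<Phi> (Z x) - \<Phi> (m x) - (Z x - m x) * \<phi> (m x) else 0)" for x
  define g where "g x = (if \<bar>\<phi> (m x)\<bar> \<le> n then \<phi> (m x) else 0)" for x
  define T where "T x = (if \<bar>\<phi> (m x)\<bar> \<le> n then \<Phi> (Z x) - \<Phi> (m x) else 0)" for x
  have gF: "g \<in> borel_measurable F"
    unfolding g_def[abs_def] using mF by measurable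
  have [measurable]: "g \<in> borel_measurable M" "T \<in> borel_measurable M"
    unfolding g_def[abs_def] T_def[abs_def] by measurable
  have g_bound: "\<bar>g x\<bar> \<le> n" for x
    by (simp add: g_def)
  have D_split: "D x = T x - (g x * Z x - g x * m x)" for x
    by (simp add: D_def T_def g_def algebra_simps)
  have "\<bar>T x\<bar> \<le> 2 * B" for x
    using \<Phi>_bound[of "Z x"] \<Phi>_bound[of "m x"] \<Phi>_bound[of 0] by (auto simp: T_def)
  then have intT: "integrable M T"
    by (intro integrable_const_bound[where B = "2 * B"] AE_I2) simp_all
  have gZm: "AE x in M. \<bar>g x * Z x\<bar> \<le> n \<and> \<bar>g x * m x\<bar> \<le> n"
    using range
  proof eventually_elim
    case (elim x)
    have "\<bar>g x\<bar> * \<bar>Z x\<bar> \<le> real n * 1"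
      using elim g_bound[of x] by (intro mult_mono) auto
    moreover have "\<bar>g x\<bar> * \<bar>m x\<bar> \<le> real n * 1"
      using elim g_bound[of x] by (intro mult_mono) auto
    ultimately show ?case
      by (simp add: abs_mult)
  qed
  have intgZ: "integrable M (\<lambda>x. g x * Z x)" and intgm: "integrable M (\<lambda>x. g x * m x)"
    by (rule integrable_const_bound[where B = n], use gZm in \<open>eventually_elim, simp\<close>, measurable)+
  have "integrable M D"
    unfolding D_split using intT intgZ intgm by simp
  moreover have "AE x in M. 0 \<le> D x"
    using nonneg by eventually_elim (simp add: D_def)
  ultimately have "(\<integral>\<^sup>+x. ennreal (D x) \<partial>M) = ennreal (\<integral>x. D x \<partial>M)"
    by (rule nn_integral_eq_integral)
  also have "(\<integral>x. D x \<partial>M) = (\<integral>x. T x \<partial>M) - ((\<integral>x. g x * Z x \<partial>M) - (\<integral>x. g x * m x \<partial>M))"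
    unfolding D_split using intT intgZ intgm by simp
  also have "(\<integral>x. g x * Z x \<partial>M) = (\<integral>x. g x * m x \<partial>M)"
    by (rule orth[OF gF g_bound])
  also have "(\<integral>x. T x \<partial>M) \<le> (\<integral>x. R x \<partial>M)"
    by (rule integral_mono_AE[OF intT intR]) (use R in \<open>eventually_elim, auto simp: T_def\<close>)
  finally show "(\<integral>\<^sup>+x. ennreal (if \<bar>\<phi> (m x)\<bar> \<le> n then \<Phi> (Z x) - \<Phi> (m x) - (Z x - m x) * \<phi> (m x) else 0) \<partial>M)
      \<le> ennreal (\<integral>x. R x \<partial>M)"
    unfolding D_def by (simp add: ennreal_leI)
qed

lemma nn_integral_bregman_le:
  fixes Z m R :: "'a \<Rightarrow> real" and G :: "real \<Rightarrow> real"
  assumes "prob_space M" and F: "subalgebra M F"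
    and Z: "Z \<in> borel_measurable M" and mF: "m \<in> borel_measurable F"
    and range: "AE x in M. Z x \<in> {0..1} \<and> m x \<in> {0..1}"
    and boundary: "AE x in M. m x \<in> {0, 1} \<longrightarrow> Z x = m x"
    and orth: "\<And>g C. g \<in> borel_measurable F \<Longrightarrow> (\<And>x. \<bar>g x\<bar> \<le> C) \<Longrightarrow>
                 (\<integral>x. g x * Z x \<partial>M) = (\<integral>x. g x * m x \<partial>M)"
    and convex: "convex_on {0..1} G" and diff: "\<And>x. x \<in> {0<..<1} \<Longrightarrow> G differentiable (at x)"
    and intR: "integrable M R" and R: "AE x in M. 0 \<le> R x \<and> G (Z x) - G (m x) \<le> R x"
  shows "(\<integral>\<^sup>+x. ennreal (bregman G (Z x) (m x)) \<partial>M) \<le> ennreal (\<integral>x. R x \<partial>M)"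
proof -
  \<comment> \<open>\<open>G\<close> and \<open>deriv G\<close> need not be Borel outside \<open>[0, 1]\<close> resp. \<open>(0, 1)\<close>, so work with cut-off versions.\<close>
  define \<Phi> where "\<Phi> x = indicator {0..1} x * G x" for x
  define \<phi> where "\<phi> x = indicator {0<..<1} x * deriv G x" for x
  obtain B where B: "\<And>x. x \<in> {0..1} \<Longrightarrow> \<bar>G x\<bar> \<le> B"
    using convex_on_01_bounded[OF convex] by blast
  have "continuous_on {0<..<1} G"
    by (rule differentiable_imp_continuous_on)
       (use diff in \<open>auto simp: differentiable_on_def intro: differentiable_at_withinI\<close>)
  then have \<Phi>_measurable: "\<Phi> \<in> borel_measurable borel"
    unfolding \<Phi>_def[abs_def] by (rule borel_measurable_indicator_01_mult)
  have "mono_on {0<..<1} (deriv G)"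
    using convex diff by (rule convex_on_01_deriv_mono)
  then have \<phi>_measurable: "\<phi> \<in> borel_measurable borel"
    unfolding \<phi>_def[abs_def] by (rule borel_measurable_indicator_mono_on_mult) simp
  have \<Phi>_bound: "\<bar>\<Phi> x\<bar> \<le> B" for x
    using B[of x] B[of 0] by (auto simp: \<Phi>_def indicator_def)
  have eq: "AE x in M. bregman G (Z x) (m x) = \<Phi> (Z x) - \<Phi> (m x) - (Z x - m x) * \<phi> (m x)
                      \<and> \<Phi> (Z x) - \<Phi> (m x) = G (Z x) - G (m x)"
    using range boundary
    by eventually_elim (auto simp: \<Phi>_def \<phi>_def bregman_def indicator_def)
  have "AE x in M. 0 \<le> bregman G (Z x) (m x)"
    using range boundary by eventually_elim (use convex diff in \<open>auto intro: bregman_nonneg\<close>)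
  with eq have nonneg: "AE x in M. 0 \<le> \<Phi> (Z x) - \<Phi> (m x) - (Z x - m x) * \<phi> (m x)"
    by eventually_elim simp
  from eq R have R': "AE x in M. 0 \<le> R x \<and> \<Phi> (Z x) - \<Phi> (m x) \<le> R x"
    by eventually_elim simp
  have "(\<integral>\<^sup>+x. ennreal (bregman G (Z x) (m x)) \<partial>M)
      = (\<integral>\<^sup>+x. ennreal (\<Phi> (Z x) - \<Phi> (m x) - (Z x - m x) * \<phi> (m x)) \<partial>M)"
    by (rule nn_integral_cong_AE) (use eq in \<open>eventually_elim, simp\<close>)
  also have "\<dots> \<le> ennreal (\<integral>x. R x \<partial>M)"
    using assms(1) F Z mF range orth \<Phi>_measurable \<phi>_measurable \<Phi>_bound nonneg intR R'
    by (rule nn_integral_tangent_divergence_le)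
  finally show ?thesis .
qed

lemma Gtilde_increment_majorant:
  fixes Z m q :: "'a \<Rightarrow> real" and G h :: "real \<Rightarrow> real"
  assumes "prob_space M" and [measurable]: "q \<in> borel_measurable M" "E \<in> sets M"
    and range: "AE x in M. Z x \<in> {0..1} \<and> m x \<in> {0..1}"
    and q01: "AE x in M. q x \<in> {0..1}" and intq: "integrable M q"
    and int_q: "(\<integral>x. q x \<partial>M) = measure M (space M - E)"
    and near: "AE x in M. x \<in> E \<longrightarrow> \<bar>Z x - m x\<bar> \<le> q x"
    and bound: "\<And>x. x \<in> {0..1} \<Longrightarrow> \<bar>G x\<bar> \<le> B"
    and concave: "concave_on {0..} h" and majorant: "\<forall>t\<ge>0. Gtilde G t \<le> h t"
  obtains R where "integrable M R" and "AE x in M. 0 \<le> R x \<and> G (Z x) - G (m x) \<le> R x"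
    and "(\<integral>x. R x \<partial>M) \<le> 2 * h (measure M (space M - E))"
proof -
  interpret prob_space M by fact
  define Q where "Q = measure M (space M - E)"
  have Q: "0 \<le> Q" "Q \<le> 1"
    unfolding Q_def by simp_all
  have h_nonneg: "0 \<le> h t" and Gtilde_le_h: "Gtilde G t \<le> h t" if "0 \<le> t" for t
    using Gtilde_nonneg[where G = G, OF bound that] majorant that by auto
  have "AE x in M. 0 \<le> q x"
    using q01 by eventually_elim simp
  then obtain c where c: "AE x in M. h (q x) \<le> h Q + c * (q x - Q)"
    using AE_concave_on_affine_majorant[OF concave intq] unfolding Q_def int_q by blast
  define R where "R x = Gtilde G 1 * indicator (space M - E) x + (h Q - c * Q) + c * q x" for x
  have int_ind: "integrable M (indicator (space M - E) :: 'a \<Rightarrow> real)"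
    by (intro integrable_unit_interval AE_I2) (simp_all add: indicator_def)
  show ?thesis
  proof (rule that[of R])
    show "integrable M R"
      unfolding R_def[abs_def] using intq int_ind by simp
    show "AE x in M. 0 \<le> R x \<and> G (Z x) - G (m x) \<le> R x"
      using range q01 near c AE_space
    proof eventually_elim
      case (elim x)
      have affine: "0 \<le> h Q - c * Q + c * q x" "Gtilde G (q x) \<le> h Q - c * Q + c * q x"
        using elim(4) h_nonneg[of "q x"] Gtilde_le_h[of "q x"] elim(2) by (simp_all add: algebra_simps)
      show ?case
      proof (cases "x \<in> E")
        case True
        have "G (Z x) - G (m x) \<le> Gtilde G (q x)"
          using Gtilde_ge[where G = G, OF bound] elim(1,3) True by auto
        then show ?thesis
          using affine True by (simp add: R_def)
      next
        case False
        have "G (Z x) - G (m x) \<le> Gtilde G 1"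
          using Gtilde_ge[where G = G, OF bound] elim(1) by auto
        moreover have "0 \<le> Gtilde G 1"
          using Gtilde_nonneg[where G = G, OF bound] by simp
        ultimately show ?thesis
          using affine False elim(5) by (simp add: R_def)
      qed
    qed
    have "(\<integral>x. R x \<partial>M) = Gtilde G 1 * Q + (h Q - c * Q) + c * Q"
      unfolding R_def[abs_def] using intq int_q int_ind
      by (subst Bochner_Integration.integral_add; (subst Bochner_Integration.integral_add)?)
         (auto simp: Q_def prob_space)
    also have "\<dots> = Gtilde G 1 * Q + h Q"
      by simp
    also have "Gtilde G 1 * Q \<le> Q * h 1"
      using Gtilde_le_h[of 1] Q(1) by (simp add: mult.commute mult_left_mono)
    also have "Q * h 1 \<le> h Q"
      using concave h_nonneg[of 0] Q by (rule concave_on_mult_le) simp_all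
    finally show "(\<integral>x. R x \<partial>M) \<le> 2 * h (measure M (space M - E))"
      unfolding Q_def by simp
  qed
qed

lemma nn_integral_bregman_le_Gtilde_star:
  fixes Z m q :: "'a \<Rightarrow> real" and G :: "real \<Rightarrow> real"
  assumes "prob_space M" and "subalgebra M F"
    and "Z \<in> borel_measurable M" and "m \<in> borel_measurable F"
    and "AE x in M. Z x \<in> {0..1} \<and> m x \<in> {0..1}"
    and "AE x in M. m x \<in> {0, 1} \<longrightarrow> Z x = m x"
    and "\<And>g C. g \<in> borel_measurable F \<Longrightarrow> (\<And>x. \<bar>g x\<bar> \<le> C) \<Longrightarrow>
           (\<integral>x. g x * Z x \<partial>M) = (\<integral>x. g x * m x \<partial>M)"
    and "q \<in> borel_measurable M" and "E \<in> sets M"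
    and "AE x in M. q x \<in> {0..1}" and "integrable M q"
    and "(\<integral>x. q x \<partial>M) = measure M (space M - E)"
    and "AE x in M. x \<in> E \<longrightarrow> \<bar>Z x - m x\<bar> \<le> q x"
    and convex: "convex_on {0..1} G" and diff: "\<And>x. x \<in> {0<..<1} \<Longrightarrow> G differentiable (at x)"
  shows "(\<integral>\<^sup>+x. ennreal (bregman G (Z x) (m x)) \<partial>M) \<le> ennreal (2 * Gtilde_star G (measure M (space M - E)))"
proof -
  obtain B where B: "\<And>x. x \<in> {0..1} \<Longrightarrow> \<bar>G x\<bar> \<le> B"
    using convex_on_01_bounded[OF convex] by blast
  show ?thesis
  proof (rule le_Gtilde_star)
    show "\<And>x. x \<in> {0..1} \<Longrightarrow> \<bar>G x\<bar> \<le> B"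
      by (fact B)
    show "0 \<le> measure M (space M - E)"
      by (rule measure_nonneg)
  next
    fix h assume h: "concave_on {0..} h" "\<forall>t\<ge>0. Gtilde G t \<le> h t"
    obtain R where R: "integrable M R" "AE x in M. 0 \<le> R x \<and> G (Z x) - G (m x) \<le> R x"
      and int_R: "(\<integral>x. R x \<partial>M) \<le> 2 * h (measure M (space M - E))"
      using Gtilde_increment_majorant[where G = G and B = B, OF assms(1,8,9,5,10-13) B h] by auto
    have "(\<integral>\<^sup>+x. ennreal (bregman G (Z x) (m x)) \<partial>M) \<le> ennreal (\<integral>x. R x \<partial>M)"
      using assms(1-7) convex diff R by (rule nn_integral_bregman_le)
    also have "\<dots> \<le> ennreal (2 * h (measure M (space M - E)))"
      using int_R by (rule ennreal_leI)
    finally show "(\<integral>\<^sup>+x. ennreal (bregman G (Z x) (m x)) \<partial>M) \<le> ennreal (2 * h (measure M (space M - E)))" .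
  qed
qed

section \<open>Conditional expectations with respect to nested \<sigma>-algebras\<close>

lemma (in sigma_finite_subalgebra) real_cond_exp_unit_interval:
  assumes "integrable M f" and "AE x in M. f x \<in> {0..1}"
  shows "AE x in M. real_cond_exp M F f x \<in> {0..1}"
  using real_cond_exp_ge_c[OF assms(1), of 0] real_cond_exp_le_c[OF assms(1), of 1] assms(2)
  by auto

lemma (in sigma_finite_subalgebra) real_cond_exp_indicator_split:
  assumes f: "integrable M f" and [measurable]: "A \<in> sets M"
  shows "AE x in M. real_cond_exp M F f x
    = real_cond_exp M F (\<lambda>x. f x * indicator A x) x + real_cond_exp M F (\<lambda>x. f x * indicator (space M - A) x) x"
proof -
  have "integrable M (\<lambda>x. f x * indicator A x)" "integrable M (\<lambda>x. f x * indicator (space M - A) x)"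
    using integrable_mult_indicator[OF _ f, of A] integrable_mult_indicator[OF _ f, of "space M - A"]
    by (simp_all add: mult.commute)
  from real_cond_exp_add[OF this]
  have "AE x in M. real_cond_exp M F (\<lambda>x. f x * indicator A x + f x * indicator (space M - A) x) x
      = real_cond_exp M F (\<lambda>x. f x * indicator A x) x + real_cond_exp M F (\<lambda>x. f x * indicator (space M - A) x) x" .
  moreover have "AE x in M. real_cond_exp M F (\<lambda>x. f x * indicator A x + f x * indicator (space M - A) x) x
      = real_cond_exp M F f x"
    using f by (intro real_cond_exp_cong) (auto simp: indicator_def)
  ultimately show ?thesis
    by eventually_elim simp
qed

lemma AE_zero_on_if_integral_indicator_zero:
  fixes f :: "'a \<Rightarrow> real"
  assumes "integrable M f" and "AE x in M. 0 \<le> f x" and [measurable]: "A \<in> sets M"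
    and "(\<integral>x. indicator A x * f x \<partial>M) = 0"
  shows "AE x in M. x \<in> A \<longrightarrow> f x = 0"
proof -
  have "integrable M (\<lambda>x. indicator A x * f x)"
    using integrable_mult_indicator[OF assms(3,1)] by simp
  moreover have "AE x in M. 0 \<le> indicator A x * f x"
    using assms(2) by eventually_elim simp
  ultimately have "AE x in M. indicator A x * f x = 0"
    using assms(4) integral_nonneg_eq_0_iff_AE by blast
  then show ?thesis
    by eventually_elim (simp add: indicator_def)
qed

locale nested_cond_exp = prob_space M +
    F: sigma_finite_subalgebra M F + H: sigma_finite_subalgebra M H
  for M F H :: "'a measure" +
  fixes Y :: "'a \<Rightarrow> real"
  assumes subalgebra_H_F: "subalgebra H F"
    and borel_measurable_Y [measurable]: "Y \<in> borel_measurable M"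
    and Y_unit_interval: "AE x in M. Y x \<in> {0..1}"
begin

lemma integrable_Y: "integrable M Y"
  by (rule integrable_unit_interval[OF _ Y_unit_interval]) simp

lemma real_cond_exp_nested_unit_interval:
  "AE x in M. real_cond_exp M H Y x \<in> {0..1} \<and> real_cond_exp M F Y x \<in> {0..1}"
  using H.real_cond_exp_unit_interval[OF integrable_Y Y_unit_interval]
    F.real_cond_exp_unit_interval[OF integrable_Y Y_unit_interval]
  by eventually_elim simp

lemma integral_mult_real_cond_exp_nested:
  assumes g: "g \<in> borel_measurable F" and g_bound: "\<And>x. \<bar>g x\<bar> \<le> C"
  shows "(\<integral>x. g x * real_cond_exp M H Y x \<partial>M) = (\<integral>x. g x * real_cond_exp M F Y x \<partial>M)"
proof -
  have [measurable]: "g \<in> borel_measurable M"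
    using measurable_from_subalg[OF F.subalg g] .
  have "AE x in M. norm (g x * Y x) \<le> C * 1"
    using Y_unit_interval
  proof eventually_elim
    case (elim x)
    then have "\<bar>g x\<bar> * \<bar>Y x\<bar> \<le> C * 1"
      using g_bound[of x] by (intro mult_mono) auto
    then show ?case
      by (simp add: abs_mult)
  qed
  then have gY: "integrable M (\<lambda>x. g x * Y x)"
    by (intro integrable_const_bound) simp_all
  have "(\<integral>x. g x * real_cond_exp M H Y x \<partial>M) = (\<integral>x. g x * Y x \<partial>M)"
    using H.real_cond_exp_intg(2)[OF gY measurable_from_subalg[OF subalgebra_H_F g]] by simp
  also have "\<dots> = (\<integral>x. g x * real_cond_exp M F Y x \<partial>M)"
    using F.real_cond_exp_intg(2)[OF gY g] by simp
  finally show ?thesis .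
qed

lemma real_cond_exp_nested_boundary:
  "AE x in M. real_cond_exp M F Y x \<in> {0, 1} \<longrightarrow> real_cond_exp M H Y x = real_cond_exp M F Y x"
proof -
  define Z where "Z = real_cond_exp M H Y"
  define m where "m = real_cond_exp M F Y"
  have mF: "m \<in> borel_measurable F"
    unfolding m_def by simp
  have [measurable]: "Z \<in> borel_measurable M" "m \<in> borel_measurable M"
    unfolding Z_def m_def by simp_all
  have Z01: "AE x in M. Z x \<in> {0..1}"
    using real_cond_exp_nested_unit_interval unfolding Z_def by eventually_elim simp
  have intZ: "integrable M Z"
    unfolding Z_def using H.real_cond_exp_int(1)[OF integrable_Y] .
  have sets_F: "A \<in> sets M" if "A \<in> sets F" for A
    using that F.subalg by (auto simp: subalgebra_def)
  have level_set: "{x \<in> space M. m x = c} \<in> sets F" for c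
  proof -
    have "m -` {c} \<inter> space F \<in> sets F"
      using measurable_sets[OF mF] by simp
    moreover have "m -` {c} \<inter> space F = {x \<in> space M. m x = c}"
      using F.subalg by (auto simp: subalgebra_def)
    ultimately show ?thesis by simp
  qed
  have orth: "(\<integral>x. indicator A x * Z x \<partial>M) = (\<integral>x. indicator A x * m x \<partial>M)" if "A \<in> sets F" for A
    unfolding Z_def m_def by (rule integral_mult_real_cond_exp_nested[where C = 1]) (use that in simp_all)
  define A0 where "A0 = {x \<in> space M. m x = 0}"
  define A1 where "A1 = {x \<in> space M. m x = 1}"
  have A0: "A0 \<in> sets F" and A1: "A1 \<in> sets F"
    unfolding A0_def A1_def by (fact level_set)+
  have [measurable]: "A0 \<in> sets M" "A1 \<in> sets M"
    using sets_F A0 A1 by blast+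
  have "(\<integral>x. indicator A0 x * Z x \<partial>M) = 0"
    unfolding orth[OF A0] by (rule integral_eq_zero_AE) (auto simp: A0_def indicator_def)
  then have Z0: "AE x in M. x \<in> A0 \<longrightarrow> Z x = 0"
    using AE_zero_on_if_integral_indicator_zero[OF intZ] Z01 by auto
  have int_A1: "integrable M (indicator A1 :: _ \<Rightarrow> real)"
    by (rule integrable_unit_interval) auto
  have "(\<integral>x. indicator A1 x * (1 - Z x) \<partial>M)
      = (\<integral>x. indicator A1 x \<partial>M) - (\<integral>x. indicator A1 x * Z x \<partial>M)"
    using integrable_mult_indicator[OF _ intZ, of A1] int_A1 by (simp add: right_diff_distrib)
  also have "\<dots> = (\<integral>x. indicator A1 x \<partial>M) - (\<integral>x. indicator A1 x * m x \<partial>M)"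
    unfolding orth[OF A1] ..
  also have "(\<integral>x. indicator A1 x * m x \<partial>M) = (\<integral>x. indicator A1 x \<partial>M)"
    by (intro Bochner_Integration.integral_cong) (auto simp: A1_def indicator_def)
  finally have "(\<integral>x. indicator A1 x * (1 - Z x) \<partial>M) = 0" by simp
  then have Z1: "AE x in M. x \<in> A1 \<longrightarrow> 1 - Z x = 0"
    using AE_zero_on_if_integral_indicator_zero[of M "\<lambda>x. 1 - Z x"] intZ Z01 by auto
  show ?thesis
    using Z0 Z1 AE_space by eventually_elim (auto simp: A0_def A1_def Z_def m_def)
qed

lemma real_cond_exp_indicator_unit_interval:
  assumes [measurable]: "A \<in> sets M"
  shows "AE x in M. real_cond_exp M F (indicator A) x \<in> {0..1}
                  \<and> real_cond_exp M F (\<lambda>x. Y x * indicator A x) x \<in> {0..1}"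
proof -
  have YA: "AE x in M. Y x * indicator A x \<in> {0..1}"
    using Y_unit_interval by eventually_elim (simp add: indicator_def)
  have "AE x in M. real_cond_exp M F (indicator A) x \<in> {0..1}"
    by (rule F.real_cond_exp_unit_interval) (auto intro: integrable_unit_interval)
  moreover have "AE x in M. real_cond_exp M F (\<lambda>x. Y x * indicator A x) x \<in> {0..1}"
    by (rule F.real_cond_exp_unit_interval[OF integrable_unit_interval YA]) (use YA in simp_all)
  ultimately show ?thesis
    by eventually_elim simp
qed

lemma set_integral_real_cond_exp_trace:
  assumes E: "E \<in> sets H" and trace: "\<And>A. A \<in> sets H \<Longrightarrow> \<exists>B\<in>sets F. A \<inter> E = B \<inter> E"
    and A: "A \<in> sets H"
  shows "(\<integral>x\<in>A. real_cond_exp M F (indicator E) x * real_cond_exp M H Y x * indicator E x \<partial>M)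
       = (\<integral>x\<in>A. real_cond_exp M F (\<lambda>x. Y x * indicator E x) x * indicator E x \<partial>M)"
proof -
  define p where "p = real_cond_exp M F (indicator E)"
  define ZE where "ZE = real_cond_exp M F (\<lambda>x. Y x * indicator E x)"
  have [measurable]: "E \<in> sets M"
    using E H.subalg by (auto simp: subalgebra_def)
  have pF: "p \<in> borel_measurable F" and ZEF: "ZE \<in> borel_measurable F"
    unfolding p_def ZE_def by simp_all
  have [measurable]: "p \<in> borel_measurable M" "ZE \<in> borel_measurable M"
    unfolding p_def ZE_def by simp_all
  have p_ZE: "AE x in M. p x \<in> {0..1} \<and> ZE x \<in> {0..1}"
    unfolding p_def ZE_def using real_cond_exp_indicator_unit_interval[OF \<open>E \<in> sets M\<close>] .
  obtain B where B: "B \<in> sets F" "A \<inter> E = B \<inter> E"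
    using trace[OF A] by blast
  have [measurable]: "B \<in> sets M"
    using B(1) F.subalg by (auto simp: subalgebra_def)
  have A_B: "indicator A x * indicator E x = (indicator B x * indicator E x :: real)" for x
    by (simp only: indicator_inter_arith[symmetric] B(2))
  have BpE_H: "(\<lambda>x. indicator B x * p x * indicator E x) \<in> borel_measurable H"
    using B(1) pF E by (intro borel_measurable_times measurable_from_subalg[OF subalgebra_H_F]
        borel_measurable_indicator) simp_all
  have int1: "integrable M (\<lambda>x. (indicator B x * p x * indicator E x) * Y x)"
  proof (rule integrable_const_bound[where B = 1])
    show "AE x in M. norm (indicator B x * p x * indicator E x * Y x) \<le> 1"
      using p_ZE Y_unit_interval by eventually_elim (simp add: indicator_def abs_mult mult_le_one)
  qed measurable
  then have int2: "integrable M (\<lambda>x. (indicator B x * p x) * (Y x * indicator E x))"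
    by (simp add: mult_ac)
  have int3: "integrable M (\<lambda>x. (indicator B x * ZE x) * indicator E x)"
  proof (rule integrable_const_bound[where B = 1])
    show "AE x in M. norm (indicator B x * ZE x * indicator E x) \<le> 1"
      using p_ZE by eventually_elim (simp add: indicator_def)
  qed measurable
  have "(\<integral>x\<in>A. p x * real_cond_exp M H Y x * indicator E x \<partial>M)
      = (\<integral>x. (indicator B x * p x * indicator E x) * real_cond_exp M H Y x \<partial>M)"
    unfolding set_lebesgue_integral_def
    by (intro Bochner_Integration.integral_cong) (simp_all add: A_B[symmetric] mult_ac)
  also have "\<dots> = (\<integral>x. (indicator B x * p x * indicator E x) * Y x \<partial>M)"
    by (rule H.real_cond_exp_intg(2)[OF int1 BpE_H]) simp
  also have "\<dots> = (\<integral>x. (indicator B x * p x) * (Y x * indicator E x) \<partial>M)"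
    by (simp add: mult_ac)
  also have "\<dots> = (\<integral>x. (indicator B x * p x) * ZE x \<partial>M)"
    unfolding ZE_def by (rule F.real_cond_exp_intg(2)[symmetric, OF int2]) (use pF B(1) in simp_all)
  also have "\<dots> = (\<integral>x. (indicator B x * ZE x) * p x \<partial>M)"
    by (simp add: mult_ac)
  also have "\<dots> = (\<integral>x. (indicator B x * ZE x) * indicator E x \<partial>M)"
    unfolding p_def by (rule F.real_cond_exp_intg(2)[OF int3]) (use ZEF B(1) in simp_all)
  also have "\<dots> = (\<integral>x\<in>A. ZE x * indicator E x \<partial>M)"
    unfolding set_lebesgue_integral_def
    by (intro Bochner_Integration.integral_cong) (simp_all add: A_B[symmetric] mult_ac)
  finally show ?thesis
    unfolding p_def ZE_def .
qed

lemma real_cond_exp_trace_mult: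
  assumes E: "E \<in> sets H" and trace: "\<And>A. A \<in> sets H \<Longrightarrow> \<exists>B\<in>sets F. A \<inter> E = B \<inter> E"
  shows "AE x in M. real_cond_exp M F (indicator E) x * real_cond_exp M H Y x * indicator E x
                  = real_cond_exp M F (\<lambda>x. Y x * indicator E x) x * indicator E x"
proof -
  define f where "f x = real_cond_exp M F (indicator E) x * real_cond_exp M H Y x * indicator E x" for x
  define g where "g x = real_cond_exp M F (\<lambda>x. Y x * indicator E x) x * indicator E x" for x
  have [measurable]: "E \<in> sets M"
    using E H.subalg by (auto simp: subalgebra_def)
  have F_H: "(\<lambda>x. real_cond_exp M F h x) \<in> borel_measurable H" for h
    by (rule measurable_from_subalg[OF subalgebra_H_F]) simp
  have fH: "f \<in> borel_measurable H" and gH: "g \<in> borel_measurable H"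
    unfolding f_def[abs_def] g_def[abs_def] using F_H E by simp_all
  have [measurable]: "f \<in> borel_measurable M" "g \<in> borel_measurable M"
    unfolding f_def[abs_def] g_def[abs_def] by simp_all
  have bounds: "AE x in M. \<bar>f x\<bar> \<le> 1 \<and> \<bar>g x\<bar> \<le> 1"
    using real_cond_exp_indicator_unit_interval[OF \<open>E \<in> sets M\<close>] real_cond_exp_nested_unit_interval
    by eventually_elim (auto simp: f_def g_def indicator_def abs_mult mult_le_one)
  have int_f: "integrable M f" and int_g: "integrable M g"
    by (rule integrable_const_bound[where B = 1], use bounds in \<open>eventually_elim, simp\<close>, measurable)+
  have "AE x in M. real_cond_exp M H f x = g x"
    using set_integral_real_cond_exp_trace[OF E trace]
    by (intro H.real_cond_exp_charact int_f int_g gH) (simp add: f_def g_def)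
  moreover have "AE x in M. real_cond_exp M H f x = f x"
    by (rule H.real_cond_exp_F_meas[OF int_f fH])
  ultimately show ?thesis
    unfolding f_def g_def by eventually_elim auto
qed

lemma real_cond_exp_trace_dist:
  assumes E: "E \<in> sets H" and trace: "\<And>A. A \<in> sets H \<Longrightarrow> \<exists>B\<in>sets F. A \<inter> E = B \<inter> E"
  shows "AE x in M. x \<in> E \<longrightarrow>
    \<bar>real_cond_exp M H Y x - real_cond_exp M F Y x\<bar> \<le> real_cond_exp M F (indicator (space M - E)) x"
proof -
  have [measurable]: "E \<in> sets M"
    using E H.subalg by (auto simp: subalgebra_def)
  define Z where "Z = real_cond_exp M H Y"
  define m where "m = real_cond_exp M F Y"
  define p where "p = real_cond_exp M F (indicator E)"
  define q where "q = real_cond_exp M F (indicator (space M - E))"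
  define ZE where "ZE = real_cond_exp M F (\<lambda>x. Y x * indicator E x)"
  define R where "R = real_cond_exp M F (\<lambda>x. Y x * indicator (space M - E) x)"
  have [measurable]: "space M - E \<in> sets M"
    by simp
  have YEc_le: "AE x in M. Y x * indicator (space M - E) x \<le> indicator (space M - E) x"
    using Y_unit_interval by eventually_elim (simp add: indicator_def)
  have intEc: "integrable M (indicator (space M - E) :: 'a \<Rightarrow> real)"
    by (intro integrable_unit_interval AE_I2) (simp_all add: indicator_def)
  have intYEc: "integrable M (\<lambda>x. Y x * indicator (space M - E) x)"
    using integrable_mult_indicator[OF _ integrable_Y, of "space M - E"] by (simp add: mult.commute)
  have Z01: "AE x in M. Z x \<in> {0..1}"
    using real_cond_exp_nested_unit_interval unfolding Z_def by eventually_elim simp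
  have q_R: "AE x in M. q x \<in> {0..1} \<and> R x \<in> {0..1}"
    unfolding q_def R_def by (rule real_cond_exp_indicator_unit_interval) simp
  have R_le_q: "AE x in M. R x \<le> q x"
    unfolding R_def q_def by (rule F.real_cond_exp_mono[OF YEc_le intYEc intEc])
  have p_q: "AE x in M. p x + q x = 1"
  proof -
    have "AE x in M. real_cond_exp M F (\<lambda>_. 1) x = 1"
      by (rule F.real_cond_exp_F_meas) auto
    moreover have "AE x in M. real_cond_exp M F (\<lambda>_. 1) x
        = real_cond_exp M F (\<lambda>x. 1 * indicator E x) x + real_cond_exp M F (\<lambda>x. 1 * indicator (space M - E) x) x"
      by (rule F.real_cond_exp_indicator_split) simp_all
    ultimately show ?thesis
      unfolding p_def q_def by eventually_elim simp
  qed
  have m_split: "AE x in M. m x = ZE x + R x"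
    unfolding m_def ZE_def R_def by (rule F.real_cond_exp_indicator_split[OF integrable_Y]) simp
  have trace_mult: "AE x in M. p x * Z x * indicator E x = ZE x * indicator E x"
    unfolding p_def Z_def ZE_def using real_cond_exp_trace_mult[OF E trace] .
  have "AE x in M. x \<in> E \<longrightarrow> \<bar>Z x - m x\<bar> \<le> q x"
    using trace_mult p_q m_split q_R R_le_q Z01
  proof eventually_elim
    case (elim x)
    show ?case
    proof
      assume "x \<in> E"
      \<comment> \<open>On \<open>E\<close>: \<open>m - Z = (ZE + R) - (p + q) Z = R - q Z\<close>, and both \<open>R\<close> and \<open>q Z\<close> lie in \<open>[0, q]\<close>.\<close>
      then have "p x * Z x = ZE x"
        using elim(1) by simp
      moreover have "p x = 1 - q x"
        using elim(2) by linarith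
      ultimately have "ZE x = Z x - q x * Z x"
        by (simp add: algebra_simps)
      then have "m x - Z x = R x - q x * Z x"
        using elim(3) by linarith
      moreover have "0 \<le> q x * Z x" "q x * Z x \<le> q x"
        using elim(4,6) by (simp_all add: mult_left_le)
      ultimately show "\<bar>Z x - m x\<bar> \<le> q x"
        using elim(4,5) by auto
    qed
  qed
  then show ?thesis
    unfolding Z_def m_def q_def .
qed

theorem nn_integral_bregman_real_cond_exp_le:
  fixes G :: "real \<Rightarrow> real"
  assumes E: "E \<in> sets H" and trace: "\<And>A. A \<in> sets H \<Longrightarrow> \<exists>B\<in>sets F. A \<inter> E = B \<inter> E"
    and convex: "convex_on {0..1} G" and diff: "\<And>x. x \<in> {0<..<1} \<Longrightarrow> G differentiable (at x)"
  shows "(\<integral>\<^sup>+x. ennreal (bregman G (real_cond_exp M H Y x) (real_cond_exp M F Y x)) \<partial>M)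
           \<le> ennreal (2 * Gtilde_star G (measure M (space M - E)))"
proof -
  have [measurable]: "E \<in> sets M"
    using E H.subalg by (auto simp: subalgebra_def)
  have ind: "integrable M (indicator (space M - E) :: 'a \<Rightarrow> real)"
    by (intro integrable_unit_interval AE_I2) (simp_all add: indicator_def)
  have q01: "AE x in M. real_cond_exp M F (indicator (space M - E)) x \<in> {0..1}"
    by (rule F.real_cond_exp_unit_interval[OF ind]) (simp add: indicator_def)
  have q: "integrable M (real_cond_exp M F (indicator (space M - E)))"
    "(\<integral>x. real_cond_exp M F (indicator (space M - E)) x \<partial>M) = measure M (space M - E)"
    using F.real_cond_exp_int[OF ind] by simp_all
  have near: "AE x in M. x \<in> E \<longrightarrow> \<bar>real_cond_exp M H Y x - real_cond_exp M F Y x\<bar>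
      \<le> real_cond_exp M F (indicator (space M - E)) x"
    using E trace by (rule real_cond_exp_trace_dist)
  have meas: "real_cond_exp M H Y \<in> borel_measurable M" "real_cond_exp M F Y \<in> borel_measurable F"
    "real_cond_exp M F (indicator (space M - E)) \<in> borel_measurable M"
    by simp_all
  show ?thesis
    using prob_space_axioms F.subalg meas(1,2) real_cond_exp_nested_unit_interval
      real_cond_exp_nested_boundary integral_mult_real_cond_exp_nested meas(3) \<open>E \<in> sets M\<close>
      q01 q near convex diff
    by (rule nn_integral_bregman_le_Gtilde_star)
qed

end

section \<open>Information structures\<close>

lemma kidx_eqI:
  assumes "disjoint_family_on I {..<N}" and "k < N" and "u \<in> I k"
  shows "kidx I N u = k"
  unfolding kidx_def
proof (rule the_equality)
  show "k < N \<and> u \<in> I k"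
    using assms(2,3) by simp
  fix j assume "j < N \<and> u \<in> I j"
  then show "j = k"
    using assms unfolding disjoint_family_on_def by blast
qed

lemma kidx_measurable:
  assumes "disjoint_family_on I {..<N}" and "\<And>k. k < N \<Longrightarrow> I k \<in> sets borel"
  shows "kidx I N \<in> measurable borel (count_space UNIV)"
  unfolding measurable_count_space_eq2_countable
proof (intro conjI ballI)
  show "kidx I N \<in> space borel \<rightarrow> UNIV"
    by simp
  fix n :: nat
  \<comment> \<open>Outside the intervals \<open>kidx\<close> takes the junk value \<open>THE k. False\<close>.\<close>
  define junk where "junk = (THE k::nat. False)"
  have outside: "kidx I N u = junk" if "u \<notin> (\<Union>k<N. I k)" for u
  proof -
    have "(\<lambda>k. k < N \<and> u \<in> I k) = (\<lambda>k. False)"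
      using that by blast
    then show ?thesis
      unfolding kidx_def junk_def by simp
  qed
  have "kidx I N -` {n} = (if n < N then I n else {}) \<union> (if junk = n then - (\<Union>k<N. I k) else {})"
  proof (intro set_eqI iffI)
    fix u assume u: "u \<in> kidx I N -` {n}"
    show "u \<in> (if n < N then I n else {}) \<union> (if junk = n then - (\<Union>k<N. I k) else {})"
    proof (cases "u \<in> (\<Union>k<N. I k)")
      case True
      then obtain k where "k < N" "u \<in> I k"
        by blast
      with u kidx_eqI[OF assms(1)] show ?thesis
        by auto
    qed (use u outside in auto)
  next
    fix u assume "u \<in> (if n < N then I n else {}) \<union> (if junk = n then - (\<Union>k<N. I k) else {})"
    then show "u \<in> kidx I N -` {n}"
      using kidx_eqI[OF assms(1)] outside by (auto split: if_splits)
  qed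
  moreover have "- (\<Union>k<N. I k) \<in> sets borel"
    using assms(2) by (intro borel_comp) blast
  ultimately have "kidx I N -` {n} \<in> sets borel"
    using assms(2) by (simp only:) (intro sets.Un; simp)
  then show "kidx I N -` {n} \<inter> space borel \<in> sets borel"
    by simp
qed

lemma sigma_finite_subalgebra_vimage_algebra:
  assumes "prob_space M" and "f \<in> measurable M N"
  shows "sigma_finite_subalgebra M (vimage_algebra (space M) f N)"
proof -
  interpret prob_space M by fact
  have "subalgebra M (vimage_algebra (space M) f N)"
    unfolding subalgebra_def
    using assms(2) by (auto simp: sets_vimage_algebra2 measurable_def)
  then have "finite_measure_subalgebra M (vimage_algebra (space M) f N)"
    unfolding finite_measure_subalgebra_def finite_measure_subalgebra_axioms_def
    using finite_measure_axioms by simp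
  then show ?thesis
    by (rule finite_measure_subalgebra_is_sigma_finite)
qed

lemma subalgebra_vimage_algebra_Pair:
  assumes "tau \<in> space M \<rightarrow> space T"
  shows "subalgebra (vimage_algebra (space M) (\<lambda>x. (K x, tau x)) (count_space UNIV \<Otimes>\<^sub>M T))
           (vimage_algebra (space M) tau T)"
  unfolding subalgebra_def
proof (intro conjI subsetI)
  fix A assume "A \<in> sets (vimage_algebra (space M) tau T)"
  then obtain C where C: "C \<in> sets T" "A = tau -` C \<inter> space M"
    unfolding sets_vimage_algebra2[OF assms] by blast
  then have "A = (\<lambda>x. (K x, tau x)) -` (UNIV \<times> C) \<inter> space M"
    by auto
  moreover have "(\<lambda>x. (K x, tau x)) -` (UNIV \<times> C) \<inter> space M
      \<in> sets (vimage_algebra (space M) (\<lambda>x. (K x, tau x)) (count_space UNIV \<Otimes>\<^sub>M T))"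
    using C(1) by (intro in_vimage_algebra) simp
  ultimately show "A \<in> sets (vimage_algebra (space M) (\<lambda>x. (K x, tau x)) (count_space UNIV \<Otimes>\<^sub>M T))"
    by simp
qed simp

lemma agreement_set_vimage_algebra_Pair:
  fixes K L :: "'a \<Rightarrow> 'k::countable"
  assumes tau: "tau \<in> space M \<rightarrow> space T"
    and L: "L \<in> measurable (vimage_algebra (space M) tau T) (count_space UNIV)"
  shows "{x \<in> space M. K x = L x}
           \<in> sets (vimage_algebra (space M) (\<lambda>x. (K x, tau x)) (count_space UNIV \<Otimes>\<^sub>M T))"
    (is "_ \<in> sets ?H")
proof -
  have "(\<lambda>x. (K x, tau x)) \<in> measurable ?H (count_space UNIV \<Otimes>\<^sub>M T)"
    by (rule measurable_vimage_algebra1) (use tau in \<open>auto simp: space_pair_measure\<close>)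
  from measurable_compose[OF this measurable_fst]
  have K: "K \<in> measurable ?H (count_space UNIV)"
    by (simp add: space_pair_measure)
  have L': "L \<in> measurable ?H (count_space UNIV)"
    using measurable_from_subalg[OF subalgebra_vimage_algebra_Pair[OF tau] L] .
  have "(K -` {k} \<inter> space ?H) \<inter> (L -` {k} \<inter> space ?H) \<in> sets ?H" for k
    by (intro sets.Int[OF measurable_sets[OF K] measurable_sets[OF L']]) simp_all
  then have "(\<Union>k. (K -` {k} \<inter> space ?H) \<inter> (L -` {k} \<inter> space ?H)) \<in> sets ?H"
    by (intro sets.countable_UN) auto
  also have "(\<Union>k. (K -` {k} \<inter> space ?H) \<inter> (L -` {k} \<inter> space ?H)) = {x \<in> space M. K x = L x}"
    by auto
  finally show ?thesis .
qed

lemma vimage_algebra_Pair_trace: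
  fixes K L :: "'a \<Rightarrow> 'k"
  assumes tau: "tau \<in> space M \<rightarrow> space T"
    and L: "L \<in> measurable (vimage_algebra (space M) tau T) (count_space UNIV)"
    and A: "A \<in> sets (vimage_algebra (space M) (\<lambda>x. (K x, tau x)) (count_space UNIV \<Otimes>\<^sub>M T))"
  shows "\<exists>B \<in> sets (vimage_algebra (space M) tau T).
           A \<inter> {x \<in> space M. K x = L x} = B \<inter> {x \<in> space M. K x = L x}"
proof -
  have "(\<lambda>x. (K x, tau x)) \<in> space M \<rightarrow> space (count_space UNIV \<Otimes>\<^sub>M T)"
    using tau by (auto simp: space_pair_measure)
  with A obtain C where C: "C \<in> sets (count_space UNIV \<Otimes>\<^sub>M T)" "A = (\<lambda>x. (K x, tau x)) -` C \<inter> space M"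
    by (auto simp: sets_vimage_algebra2)
  have "(\<lambda>x. (L x, tau x)) \<in> measurable (vimage_algebra (space M) tau T) (count_space UNIV \<Otimes>\<^sub>M T)"
    using L measurable_vimage_algebra1[OF tau] by (rule measurable_Pair)
  from measurable_sets[OF this C(1)]
  have "(\<lambda>x. (L x, tau x)) -` C \<inter> space M \<in> sets (vimage_algebra (space M) tau T)"
    by simp
  moreover have "A \<inter> {x \<in> space M. K x = L x}
      = ((\<lambda>x. (L x, tau x)) -` C \<inter> space M) \<inter> {x \<in> space M. K x = L x}"
    using C(2) by auto
  ultimately show ?thesis
    by blast
qed

theorem nn_integral_bregman_vimage_algebra_Pair_le:
  fixes K L :: "'a \<Rightarrow> 'k::countable" and Y :: "'a \<Rightarrow> real" and G :: "real \<Rightarrow> real"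
  assumes "prob_space M" and tau: "tau \<in> measurable M T" and K: "K \<in> measurable M (count_space UNIV)"
    and L: "L \<in> measurable (vimage_algebra (space M) tau T) (count_space UNIV)"
    and "Y \<in> borel_measurable M" and "AE x in M. Y x \<in> {0..1}"
    and "convex_on {0..1} G" and "\<And>x. x \<in> {0<..<1} \<Longrightarrow> G differentiable (at x)"
  shows "(\<integral>\<^sup>+x. ennreal (bregman G
            (real_cond_exp M (vimage_algebra (space M) (\<lambda>x. (K x, tau x)) (count_space UNIV \<Otimes>\<^sub>M T)) Y x)
            (real_cond_exp M (vimage_algebra (space M) tau T) Y x)) \<partial>M)
         \<le> ennreal (2 * Gtilde_star G (measure M {x \<in> space M. K x \<noteq> L x}))"
proof -
  have tau_space: "tau \<in> space M \<rightarrow> space T"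
    using measurable_space[OF tau] by blast
  have "(\<lambda>x. (K x, tau x)) \<in> measurable M (count_space UNIV \<Otimes>\<^sub>M T)"
    using K tau by measurable
  then interpret nested_cond_exp M "vimage_algebra (space M) tau T"
      "vimage_algebra (space M) (\<lambda>x. (K x, tau x)) (count_space UNIV \<Otimes>\<^sub>M T)" Y
    using assms(1,5,6) subalgebra_vimage_algebra_Pair[OF tau_space]
    by (intro nested_cond_exp.intro nested_cond_exp_axioms.intro sigma_finite_subalgebra_vimage_algebra tau)
  have "space M - {x \<in> space M. K x = L x} = {x \<in> space M. K x \<noteq> L x}"
    by auto
  then show ?thesis
    using nn_integral_bregman_real_cond_exp_le[OF agreement_set_vimage_algebra_Pair[OF tau_space L]
        vimage_algebra_Pair_trace[OF tau_space L] assms(7,8)]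
    by simp
qed

theorem lemmaC7:
  fixes M :: "'w measure" and S :: "'s measure" and T :: "'t measure"
    and sig :: "'w \<Rightarrow> 's" and tau :: "'w \<Rightarrow> 't" and Y :: "'w \<Rightarrow> real"
    and G :: "real \<Rightarrow> real" and I :: "nat \<Rightarrow> real set" and N :: nat
  assumes "prob_space M"
    and "sig \<in> measurable M S" and "tau \<in> measurable M T"
    and "Y \<in> borel_measurable M" and "\<And>w. w \<in> space M \<Longrightarrow> 0 \<le> Y w \<and> Y w \<le> 1"
    and "strictly_convex_on {0..1} G"
    and "\<And>x. x \<in> {0<..<1} \<Longrightarrow> G differentiable (at x)"
    and "\<And>k. k < N \<Longrightarrow> is_interval (I k)"
    and "disjoint_family_on I {..<N}"
    and "(\<Union>k<N. I k) = {0..1}"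
  shows
    "let mu_sig = real_cond_exp M (vimage_algebra (space M) sig S) Y;
         mu_tau = real_cond_exp M (vimage_algebra (space M) tau T) Y;
         mu_Stau = real_cond_exp M
                     (vimage_algebra (space M) (\<lambda>w. (kidx I N (mu_sig w), tau w))
                        (count_space UNIV \<Otimes>\<^sub>M T)) Y;
         Q = measure M {w \<in> space M. kidx I N (mu_sig w) \<noteq> kidx I N (mu_tau w)}
     in (\<integral>\<^sup>+ w. ennreal (bregman G (mu_Stau w) (mu_tau w)) \<partial>M)
          \<le> ennreal (2 * Gtilde_star G Q)"
proof -
  define mu_sig where "mu_sig = real_cond_exp M (vimage_algebra (space M) sig S) Y"
  define mu_tau where "mu_tau = real_cond_exp M (vimage_algebra (space M) tau T) Y"
  have [measurable]: "kidx I N \<in> measurable borel (count_space UNIV)"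
    using assms(8,9) by (intro kidx_measurable) (auto intro: real_interval_borel_measurable)
  have "mu_sig \<in> borel_measurable M"
    unfolding mu_sig_def by simp
  then have "(\<lambda>w. kidx I N (mu_sig w)) \<in> measurable M (count_space UNIV)"
    by measurable
  moreover have "(\<lambda>w. kidx I N (mu_tau w)) \<in> measurable (vimage_algebra (space M) tau T) (count_space UNIV)"
    unfolding mu_tau_def by measurable
  ultimately have "(\<integral>\<^sup>+w. ennreal (bregman G
      (real_cond_exp M (vimage_algebra (space M) (\<lambda>w. (kidx I N (mu_sig w), tau w)) (count_space UNIV \<Otimes>\<^sub>M T)) Y w)
      (mu_tau w)) \<partial>M)
    \<le> ennreal (2 * Gtilde_star G (measure M {w \<in> space M. kidx I N (mu_sig w) \<noteq> kidx I N (mu_tau w)}))"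
    unfolding mu_tau_def
    using assms(1,3,4,7) strictly_convex_on_imp_convex_on[OF _ assms(6)]
    by (intro nn_integral_bregman_vimage_algebra_Pair_le) (auto intro: AE_I2 simp: assms(5))
  then show ?thesis
    by (simp only: Let_def mu_sig_def mu_tau_def)
qed

end
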